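(* For every integer $n\ge 1$, $(n-1) P_{n-1} P_{n}^2=2 P_{n+1} P_{n}^2+(n-1) P_{2 n} P_{n}+(n+1) P_{n+1} (P_{n+1}^2-P_{2 n+1})$, where $P_k$ denotes the $k$-th Pell number.
   Context: The Pell numbers are defined by $P_0=0$, $P_1=1$, $P_k=2P_{k-1}+P_{k-2}$ for $k\ge 2$. *)

theory Defs
  imports Main
begin

fun pell :: "nat \<Rightarrow> int" where
  "pell 0 = 0"
| "pell (Suc 0) = 1"
| "pell (Suc (Suc k)) = 2 * pell (Suc k) + pell k"

end

theory Submission
  imports Defs
begin

(* With a = P(n+1), b = P(n), c = P(n-1) we have a = 2b + c, P(2n) = b(a + c) and
   P(2n+1) = a^2 + b^2. Hence P(n+1)^2 - P(2n+1) = -b^2, and the right-hand side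
   collapses to b^2 (2a + (n-1)(a + c) - (n+1)a) = (n-1) c b^2. *)

lemma pell_add: "pell (m + n + 1) = pell (m + 1) * pell (n + 1) + pell m * pell n"
proof (induction n rule: pell.induct)
  case 1
  show ?case by simp
next
  case 2
  show ?case by (simp add: numeral_2_eq_2)
next
  case (3 k)
  have "pell (m + Suc (Suc k) + 1) = 2 * pell (m + Suc k + 1) + pell (m + k + 1)"
    using pell.simps(3)[of "m + k + 1"] by (simp add: ac_simps)
  also have "\<dots> = pell (m + 1) * pell (Suc (Suc k) + 1) + pell m * pell (Suc (Suc k))"
    using "3.IH" by (simp add: algebra_simps)
  finally show ?case .
qed

lemma pell_Suc_double: "pell (2 * n + 1) = pell (n + 1)^2 + pell n ^ 2"
  using pell_add[of n n] by (simp add: power2_eq_square mult_2)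

lemma pell_double:
  assumes "n \<ge> 1"
  shows "pell (2 * n) = pell n * (pell (n + 1) + pell (n - 1))"
proof -
  have "pell (2 * n) = pell ((n - 1) + n + 1)"
    using assms by (intro arg_cong[where f = pell]) simp
  also have "\<dots> = pell n * (pell (n + 1) + pell (n - 1))"
    unfolding pell_add using assms by (simp add: algebra_simps)
  finally show ?thesis .
qed

lemma pell_Suc_eq:
  assumes "n \<ge> 1"
  shows "pell (n + 1) = 2 * pell n + pell (n - 1)"
  using assms by (cases n) auto

theorem proposition7p5:
  fixes n :: nat
  assumes "n \<ge> 1"
  shows "(int n - 1) * pell (n - 1) * (pell n)^2 =
         2 * pell (n + 1) * (pell n)^2 + (int n - 1) * pell (2 * n) * pell n
         + (int n + 1) * pell (n + 1) * ((pell (n + 1))^2 - pell (2 * n + 1))"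
  unfolding pell_Suc_double pell_double[OF assms] pell_Suc_eq[OF assms]
  by (simp add: algebra_simps power2_eq_square)

end
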